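(* Let $C$ be a hyperelliptic curve of genus $3$ over $\mathbb{C}$ given by $y^2=f(x)$ with $f$ a separable polynomial of degree $8$. Denote by $\alpha_1,\dots,\alpha_8$ the roots of $f$ and by $R_i=(\alpha_i,0)$ the corresponding branch points; for $w\in\mathbb{C}$ with $f(w)\neq 0$ let $P_1^w,P_2^w$ be the two points of $C$ over $x=w$. Then: (1) For $q=1$ and any $\beta\in\mathbb{C}$, the set $B_{1,\beta}=\left\{\frac{(x-\beta)^j}{y}\,dx : 0\le j\le 2\right\}$ is a basis of $H^0(C,(\Omega^1)^1)$. (2) For $q=2$, any $\beta\in\mathbb{C}$ and $m\in\{1,2\}$, the set $B_{2,\beta}=\left\{\frac{(x-\beta)^j}{y^2}(dx)^2 : 0\le j\le 4\right\}\cup\left\{\frac{y-f_{\beta,4,m}(x)}{y^2}(dx)^2\right\}$ is a basis of $H^0(C,(\Omega^1)^2)$, where $f_{\beta,4,m}(x)=0$ if $\beta$ is a root of $f$, and if $\beta=w$ is not a root of $f$ then $f_{w,4,m}(x)$ is the degree-$4$ Taylor polynomial at $x=w$ of the local branch of $y$ (as a function of $x$) through $P_m^w$. (3) For every $q\ge 2$ and every root $\beta$ of $f$, the set $B_{q,\beta}=\left\{\frac{(x-\beta)^j}{y^q}(dx)^q : 0\le j\le 2q\right\}\cup\left\{\frac{(x-\beta)^j y}{y^q}(dx)^q : 0\le j\le 2q-4\right\}$ is a basis of $H^0(C,(\Omega^1)^q)$.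
   Context: $H^0(C,(\Omega^1)^q)$ denotes the complex vector space of holomorphic $q$-differentials on the (smooth projective model of the) curve $C$; for genus $3$ its dimension is $3$ if $q=1$ and $2(2q-1)$ if $q\ge 2$. *)

theory Defs
  imports "HOL-Computational_Algebra.Computational_Algebra"
begin

text \<open>An element of the function field
  of C: y^2 = f(x) is represented as a pair (A, B) meaning A(x) + B(x) y.
  A meromorphic q-differential is g (dx)^q with g in the function field.\<close>

type_synonym ratfun = "complex poly fract"
type_synonym ffelem = "ratfun \<times> ratfun"

definition ratfun_of_poly :: "complex poly \<Rightarrow> ratfun" where
  "ratfun_of_poly p = Fract p 1"

definition eval_ratfun :: "ratfun \<Rightarrow> complex fls \<Rightarrow> complex fls" where
  "eval_ratfun A X = (let (n, d) = (SOME (n, d). d \<noteq> 0 \<and> A = Fract n d) in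
      poly (map_poly fls_const n) X / poly (map_poly fls_const d) X)"

definition eval_ff :: "ffelem \<Rightarrow> complex fls \<Rightarrow> complex fls \<Rightarrow> complex fls" where
  "eval_ff g X Y = eval_ratfun (fst g) X + eval_ratfun (snd g) X * Y"

text \<open>Local parametrisations (by a uniformiser t) of the points of the smooth projective
  model of y^2 = f(x), f of even degree 2g+2 without repeated roots:
  non-branch affine points (x = a + t, y a branch of sqrt(f)),
  branch points (x = alpha + t^2), and the two points at infinity (x = 1/t).\<close>
definition curve_places :: "complex poly \<Rightarrow> (complex fls \<times> complex fls) set" where
  "curve_places f =
     {(X, Y). Y\<^sup>2 = poly (map_poly fls_const f) X \<and>
        ((\<exists>a. poly f a \<noteq> 0 \<and> X = fls_const a + fls_X) \<or>
         (\<exists>a. poly f a = 0 \<and> X = fls_const a + fls_X\<^sup>2) \<or>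
         X = fls_X_inv)}"

definition holo_qdiff :: "complex poly \<Rightarrow> nat \<Rightarrow> ffelem \<Rightarrow> bool" where
  "holo_qdiff f q g \<longleftrightarrow>
     (\<forall>(X, Y) \<in> curve_places f.
        let h = eval_ff g X Y * (fls_deriv X) ^ q in h = 0 \<or> fls_subdegree h \<ge> 0)"

definition ff_scale :: "complex \<Rightarrow> ffelem \<Rightarrow> ffelem" where
  "ff_scale c g = (ratfun_of_poly [:c:] * fst g, ratfun_of_poly [:c:] * snd g)"

definition ff_lincomb :: "(nat \<Rightarrow> complex) \<Rightarrow> (nat \<Rightarrow> ffelem) \<Rightarrow> nat \<Rightarrow> ffelem" where
  "ff_lincomb c b n = (\<Sum>i<n. fst (ff_scale (c i) (b i)), \<Sum>i<n. snd (ff_scale (c i) (b i)))"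

definition is_basis_H0 :: "complex poly \<Rightarrow> nat \<Rightarrow> nat \<Rightarrow> (nat \<Rightarrow> ffelem) \<Rightarrow> bool" where
  "is_basis_H0 f q n b \<longleftrightarrow>
     (\<forall>i<n. holo_qdiff f q (b i)) \<and>
     (\<forall>c. ff_lincomb c b n = (0, 0) \<longrightarrow> (\<forall>i<n. c i = 0)) \<and>
     (\<forall>g. holo_qdiff f q g \<longrightarrow> (\<exists>c. g = ff_lincomb c b n))"

definition xb :: "complex \<Rightarrow> ratfun" where
  "xb \<beta> = ratfun_of_poly [:-\<beta>, 1:]"

definition y_inv_pow :: "complex poly \<Rightarrow> nat \<Rightarrow> ffelem" where
  "y_inv_pow f q = (if even q then (inverse (ratfun_of_poly f) ^ (q div 2), 0)
                    else (0, inverse (ratfun_of_poly f) ^ ((q + 1) div 2)))"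

definition ff_mult :: "complex poly \<Rightarrow> ffelem \<Rightarrow> ffelem \<Rightarrow> ffelem" where
  "ff_mult f g h = (fst g * fst h + ratfun_of_poly f * snd g * snd h,
                    fst g * snd h + snd g * fst h)"

text \<open>Degree-4 Taylor polynomial at x = w of a local branch Y (in t = x - w) of y.\<close>
definition taylor4 :: "complex \<Rightarrow> complex fls \<Rightarrow> complex poly" where
  "taylor4 w Y = (\<Sum>k\<le>4. smult (fls_nth Y (int k)) ([:-w, 1:] ^ k))"

end

theory Submission
  imports Defs "HOL-Computational_Algebra.Field_as_Ring"
begin

text \<open>Write a q-differential as (A + B y) (dx)^q with A, B rational in x. Since y \<mapsto> -y permutes the
  places of the curve, it is holomorphic iff both A (dx)^q and B y (dx)^q are. Comparing orders in
  the local parameters t -- x = a + t at ordinary points, x = \<alpha> + t^2 over a root \<alpha> of f (where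
  y has order 1) and x = 1/t at the two points at infinity (where y has order -(g + 1), as
  deg f = 2g + 2) -- shows that this happens exactly when A = P / f^(floor(q/2)) and
  B = Q / f^(ceiling(q/2)) with explicit bounds on the degrees of P and Q. Each family of the
  theorem is block triangular with respect to the shifted powers (x - \<beta>)^j, which form a basis of
  the polynomials of bounded degree, hence it is a basis.\<close>

definition fls_poly :: "complex poly \<Rightarrow> complex fls \<Rightarrow> complex fls" where
  "fls_poly p X = poly (map_poly fls_const p) X"

lemma fls_poly_pCons: "fls_poly (pCons a p) X = fls_const a + X * fls_poly p X"
  by (simp add: fls_poly_def map_poly_pCons)

lemma fls_poly_0 [simp]: "fls_poly 0 X = 0"
  by (simp add: fls_poly_def)

lemma fls_poly_const [simp]: "fls_poly [:c:] X = fls_const c"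
  by (simp add: fls_poly_pCons)

lemma fls_poly_1 [simp]: "fls_poly 1 X = 1"
  using fls_poly_const[of 1 X] by (simp add: one_pCons)

lemma fls_poly_add: "fls_poly (p + q) X = fls_poly p X + fls_poly q X"
proof (induct p arbitrary: q rule: pCons_induct)
  case (pCons a p)
  then show ?case
    by (cases q rule: pCons_cases) (simp add: fls_poly_pCons algebra_simps flip: fls_plus_const)
qed simp

lemma fls_poly_smult: "fls_poly (smult a p) X = fls_const a * fls_poly p X"
  by (induct p rule: pCons_induct) (auto simp: fls_poly_pCons algebra_simps)

lemma fls_poly_mult: "fls_poly (p * q) X = fls_poly p X * fls_poly q X"
  by (induct p rule: pCons_induct) (auto simp: fls_poly_pCons fls_poly_add fls_poly_smult algebra_simps)

lemma fls_poly_power: "fls_poly (p ^ n) X = fls_poly p X ^ n"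
  by (induct n) (auto simp: fls_poly_mult)

definition fps_poly :: "complex poly \<Rightarrow> complex fps \<Rightarrow> complex fps" where
  "fps_poly p F = poly (map_poly fps_const p) F"

lemma fls_poly_fps_to_fls: "fls_poly p (fps_to_fls F) = fps_to_fls (fps_poly p F)"
  by (induct p rule: pCons_induct)
     (auto simp: fls_poly_pCons fps_poly_def map_poly_pCons fls_times_fps_to_fls)

lemma fps_poly_nth_0: "fps_poly p F $ 0 = poly p (F $ 0)"
  by (induct p rule: pCons_induct) (auto simp: fps_poly_def map_poly_pCons)

lemma fls_poly_at_shift:
  assumes "p \<noteq> 0" "G $ 0 = 0" "G \<noteq> 0"
  shows "fls_poly p (fps_to_fls (fps_const a + G)) \<noteq> 0 \<and>
         fls_subdegree (fls_poly p (fps_to_fls (fps_const a + G))) = int (order a p * subdegree G)"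
proof -
  obtain r where r: "p = [:-a,1:] ^ order a p * r" "\<not> [:-a,1:] dvd r"
    using order_decomp[OF assms(1)] by blast
  define R where "R = fps_poly r (fps_const a + G)"
  have "R $ 0 \<noteq> 0"
    using assms(2) r(2) poly_eq_0_iff_dvd by (auto simp: R_def fps_poly_nth_0)
  then have "R \<noteq> 0" "subdegree R = 0" by (auto simp: subdegree_eq_0)
  moreover have "fls_poly r (fps_to_fls (fps_const a + G)) = fps_to_fls R"
    unfolding R_def by (rule fls_poly_fps_to_fls)
  then have "fls_poly p (fps_to_fls (fps_const a + G)) = fps_to_fls G ^ order a p * fps_to_fls R"
    by (subst r(1)) (simp only: fls_poly_mult fls_poly_power, simp add: fls_poly_pCons)
  ultimately show ?thesis
    using assms(3) by (auto simp: fls_subdegree_pow fls_subdegree_fls_to_fps)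
qed

lemma fls_poly_at_point:
  assumes "p \<noteq> 0"
  shows "fls_poly p (fls_const a + fls_X) \<noteq> 0 \<and>
         fls_subdegree (fls_poly p (fls_const a + fls_X)) = int (order a p)"
  using fls_poly_at_shift[OF assms, of "fps_X" a] by simp

lemma fls_poly_at_branch_point:
  assumes "p \<noteq> 0"
  shows "fls_poly p (fls_const a + fls_X\<^sup>2) \<noteq> 0 \<and>
         fls_subdegree (fls_poly p (fls_const a + fls_X\<^sup>2)) = 2 * int (order a p)"
  using fls_poly_at_shift[OF assms, of "fps_X^2" a] by (simp add: fps_to_fls_power)

lemma fls_poly_at_infinity:
  assumes "p \<noteq> 0"
  shows "fls_poly p fls_X_inv \<noteq> 0 \<and> fls_subdegree (fls_poly p fls_X_inv) = - int (degree p)"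
  using assms
proof (induct p rule: pCons_induct)
  case (pCons a r)
  show ?case
  proof (cases "r = 0")
    case False
    with pCons.hyps(2) have r: "fls_X_inv * fls_poly r fls_X_inv \<noteq> 0"
      "fls_subdegree (fls_X_inv * fls_poly r fls_X_inv) = - 1 - int (degree r)"
      by auto
    then have "fls_subdegree (fls_const a + fls_X_inv * fls_poly r fls_X_inv) = - 1 - int (degree r)"
      using fls_subdegree_add_eq2[OF r(1), of "fls_const a"] by simp
    moreover from this have "fls_const a + fls_X_inv * fls_poly r fls_X_inv \<noteq> 0"
      by (intro notI) simp
    ultimately show ?thesis
      using False by (simp add: fls_poly_pCons)
  qed (use pCons in \<open>simp add: fls_poly_pCons\<close>)
qed simp

definition fls_transcendental :: "complex fls \<Rightarrow> bool" where
  "fls_transcendental X \<longleftrightarrow> (\<forall>p. p \<noteq> 0 \<longrightarrow> fls_poly p X \<noteq> 0)"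

lemma fls_transcendental_point: "fls_transcendental (fls_const a + fls_X)"
  using fls_poly_at_point unfolding fls_transcendental_def by blast

lemma fls_transcendental_branch_point: "fls_transcendental (fls_const a + fls_X\<^sup>2)"
  using fls_poly_at_branch_point unfolding fls_transcendental_def by blast

lemma fls_transcendental_infinity: "fls_transcendental fls_X_inv"
  using fls_poly_at_infinity unfolding fls_transcendental_def by blast

text \<open>The representative chosen by \<open>SOME\<close> in \<open>eval_ratfun\<close> is irrelevant once no nonzero
  polynomial vanishes at \<open>X\<close>.\<close>

lemma eval_ratfun_Fract:
  assumes "fls_transcendental X" "d \<noteq> 0"
  shows "eval_ratfun (Fract n d) X = fls_poly n X / fls_poly d X"
proof -
  define nd where "nd = (SOME nd. snd nd \<noteq> 0 \<and> Fract n d = Fract (fst nd) (snd nd))"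
  have "\<exists>nd. snd nd \<noteq> 0 \<and> Fract n d = Fract (fst nd) (snd nd)"
    using assms(2) by (intro exI[of _ "(n, d)"]) simp
  from someI_ex[OF this] have nd: "snd nd \<noteq> 0" "Fract n d = Fract (fst nd) (snd nd)"
    unfolding nd_def by auto
  have "(SOME (n', d'). d' \<noteq> 0 \<and> Fract n d = Fract n' d') = nd"
    unfolding nd_def by (rule arg_cong[where f = Eps]) auto
  then have eval: "eval_ratfun (Fract n d) X = fls_poly (fst nd) X / fls_poly (snd nd) X"
    unfolding eval_ratfun_def by (simp add: Let_def case_prod_beta fls_poly_def)
  have "n * snd nd = fst nd * d"
    using nd assms(2) by (simp add: eq_fract)
  then have "fls_poly n X * fls_poly (snd nd) X = fls_poly (fst nd) X * fls_poly d X"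
    by (metis fls_poly_mult)
  moreover have "fls_poly d X \<noteq> 0" "fls_poly (snd nd) X \<noteq> 0"
    using assms nd unfolding fls_transcendental_def by auto
  ultimately show ?thesis
    unfolding eval by (simp add: frac_eq_eq)
qed

lemma fls_square_root_exists:
  fixes F :: "complex fls"
  assumes "F \<noteq> 0" "fls_subdegree F = 2 * k"
  obtains Y where "Y\<^sup>2 = F" "fls_subdegree Y = k"
proof -
  define B where "B = fls_base_factor_to_fps F"
  have B0: "B $ 0 \<noteq> 0"
    using assms(1) unfolding B_def by (rule fls_base_factor_to_fps_base)
  define S where "S = fps_radical (\<lambda>_ c. csqrt c) 2 B"
  have "csqrt (B $ 0) ^ Suc 1 = B $ 0"
    by (simp add: power2_eq_square[symmetric])
  then have S: "S\<^sup>2 = B"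
    using power_radical[OF B0, of "\<lambda>_ c. csqrt c" 1] unfolding S_def by (simp add: numeral_2_eq_2)
  have "F = fls_X_intpow (2 * k) * fps_to_fls B"
    using fls_conv_base_factor_to_fps_shift_subdegree[of F] assms(2) unfolding B_def
    by (simp add: fls_X_intpow_times_conv_shift)
  also have "fls_X_intpow (2 * k) = (fls_X_intpow k)\<^sup>2"
    using fls_X_intpow_power[of k 2] by (metis of_nat_numeral)
  finally have Y: "(fls_X_intpow k * fps_to_fls S)\<^sup>2 = F"
    by (simp only: power_mult_distrib fps_to_fls_power[symmetric] S)
  moreover have "2 * fls_subdegree (fls_X_intpow k * fps_to_fls S) = 2 * k"
    using assms(2) by (simp flip: Y add: fls_subdegree_pow)
  ultimately show ?thesis
    by (intro that) simp_all
qed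

lemma curve_placesE:
  assumes "(X, Y) \<in> curve_places f"
  obtains (point) a where "poly f a \<noteq> 0" "X = fls_const a + fls_X" "Y\<^sup>2 = fls_poly f X"
  | (branch_point) a where "poly f a = 0" "X = fls_const a + fls_X\<^sup>2" "Y\<^sup>2 = fls_poly f X"
  | (infinity) "X = fls_X_inv" "Y\<^sup>2 = fls_poly f X"
  using assms unfolding curve_places_def fls_poly_def by auto

lemma curve_places_transcendental: "(X, Y) \<in> curve_places f \<Longrightarrow> fls_transcendental X"
  by (cases rule: curve_placesE)
     (auto simp: fls_transcendental_point fls_transcendental_branch_point fls_transcendental_infinity)

lemma curve_places_uminus: "(X, Y) \<in> curve_places f \<Longrightarrow> (X, - Y) \<in> curve_places f"
  unfolding curve_places_def by auto

lemma curve_places_square: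
  assumes "(X, Y) \<in> curve_places f" "f \<noteq> 0"
  shows "fls_poly f X \<noteq> 0" "Y \<noteq> 0" "2 * fls_subdegree Y = fls_subdegree (fls_poly f X)"
proof -
  show "fls_poly f X \<noteq> 0"
    using curve_places_transcendental[OF assms(1)] assms(2) unfolding fls_transcendental_def by blast
  moreover from assms(1) have Y: "Y\<^sup>2 = fls_poly f X"
    by (cases rule: curve_placesE) auto
  ultimately show "Y \<noteq> 0"
    by auto
  show "2 * fls_subdegree Y = fls_subdegree (fls_poly f X)"
    using fls_subdegree_pow[of Y 2] unfolding Y by simp
qed

lemma curve_place_over_point:
  assumes "rsquarefree f" "poly f a \<noteq> 0"
  obtains Y where "(fls_const a + fls_X, Y) \<in> curve_places f" "fls_subdegree Y = 0"
proof -
  have "order a f = 0"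
    using assms(2) by (rule order_0I)
  then obtain Y where "Y\<^sup>2 = fls_poly f (fls_const a + fls_X)" "fls_subdegree Y = 0"
    using fls_poly_at_point[of f a] assms(1) fls_square_root_exists[of _ 0]
    by (auto simp: rsquarefree_def)
  with assms(2) show ?thesis
    by (intro that) (auto simp: curve_places_def fls_poly_def)
qed

lemma curve_place_over_root:
  assumes "rsquarefree f" "poly f a = 0"
  obtains Y where "(fls_const a + fls_X\<^sup>2, Y) \<in> curve_places f" "fls_subdegree Y = 1"
proof -
  have "order a f = 1"
    using assms rsquarefree_root_order by (auto simp: rsquarefree_def)
  then obtain Y where "Y\<^sup>2 = fls_poly f (fls_const a + fls_X\<^sup>2)" "fls_subdegree Y = 1"
    using fls_poly_at_branch_point[of f a] assms(1) fls_square_root_exists[of _ 1]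
    by (auto simp: rsquarefree_def)
  with assms(2) show ?thesis
    by (intro that) (auto simp: curve_places_def fls_poly_def)
qed

lemma curve_place_at_infinity:
  assumes "f \<noteq> 0" "degree f = 2 * h"
  obtains Y where "(fls_X_inv, Y) \<in> curve_places f" "fls_subdegree Y = - int h"
proof -
  obtain Y where "Y\<^sup>2 = fls_poly f fls_X_inv" "fls_subdegree Y = - int h"
    using fls_poly_at_infinity[OF assms(1)] assms(2) fls_square_root_exists[of _ "- int h"] by auto
  then show ?thesis
    by (intro that) (auto simp: curve_places_def fls_poly_def)
qed

definition fls_no_pole :: "complex fls \<Rightarrow> bool" where
  "fls_no_pole h \<longleftrightarrow> h = 0 \<or> 0 \<le> fls_subdegree h"

lemma fls_no_pole_add: "fls_no_pole a \<Longrightarrow> fls_no_pole b \<Longrightarrow> fls_no_pole (a + b)"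
  unfolding fls_no_pole_def using fls_plus_subdegree[of a b] by force

lemma fls_no_pole_diff: "fls_no_pole a \<Longrightarrow> fls_no_pole b \<Longrightarrow> fls_no_pole (a - b)"
  unfolding fls_no_pole_def using fls_plus_subdegree[of a "- b"] by force

lemma fls_no_pole_const_mult: "fls_no_pole a \<Longrightarrow> fls_no_pole (fls_const c * a)"
  unfolding fls_no_pole_def by (cases "c = 0 \<or> a = 0") auto

definition holo_component :: "complex poly \<Rightarrow> nat \<Rightarrow> nat \<Rightarrow> ratfun \<Rightarrow> bool" where
  "holo_component f q e A \<longleftrightarrow>
     (\<forall>(X, Y) \<in> curve_places f. fls_no_pole (eval_ratfun A X * Y ^ e * fls_deriv X ^ q))"

lemma fls_no_pole_sum_diff_iff:
  "fls_no_pole (a + b) \<and> fls_no_pole (a - b) \<longleftrightarrow> fls_no_pole a \<and> fls_no_pole b"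
proof
  have half: "fls_const (1/2) * (z + z) = z" for z :: "complex fls"
  proof -
    have "fls_const (1/2) * (z + z) = fls_const (1/2) * fls_const 2 * z"
      by (simp only: mult_2[symmetric] mult.assoc fls_const_numeral)
    then show ?thesis by (simp only: fls_const_mult_const) simp
  qed
  have "(a + b) + (a - b) = a + a" "(a + b) - (a - b) = b + b"
    by simp_all
  moreover assume "fls_no_pole (a + b) \<and> fls_no_pole (a - b)"
  then have "fls_no_pole (fls_const (1/2) * ((a + b) + (a - b)))"
    "fls_no_pole (fls_const (1/2) * ((a + b) - (a - b)))"
    using fls_no_pole_const_mult fls_no_pole_add fls_no_pole_diff by blast+
  ultimately show "fls_no_pole a \<and> fls_no_pole b"
    by (simp only: half)
qed (auto intro: fls_no_pole_add fls_no_pole_diff)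

text \<open>The two components are separated by the hyperelliptic involution y \<mapsto> -y.\<close>

lemma holo_qdiff_iff_components:
  "holo_qdiff f q (A, B) \<longleftrightarrow> holo_component f q 0 A \<and> holo_component f q 1 B"
proof -
  define a where "a X Y = eval_ratfun A X * Y ^ 0 * fls_deriv X ^ q" for X Y :: "complex fls"
  define b where "b X Y = eval_ratfun B X * Y ^ 1 * fls_deriv X ^ q" for X Y :: "complex fls"
  have ff: "eval_ff (A, B) X Y * fls_deriv X ^ q = a X Y + b X Y"
    "eval_ff (A, B) X (- Y) * fls_deriv X ^ q = a X Y - b X Y" for X Y
    by (simp_all add: eval_ff_def a_def b_def algebra_simps)
  have "holo_qdiff f q (A, B) \<longleftrightarrow>
      (\<forall>(X, Y) \<in> curve_places f. fls_no_pole (a X Y + b X Y) \<and> fls_no_pole (a X Y - b X Y))"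
    unfolding holo_qdiff_def Let_def fls_no_pole_def[symmetric] ff[symmetric]
    by (blast intro: curve_places_uminus)
  also have "\<dots> \<longleftrightarrow> holo_component f q 0 A \<and> holo_component f q 1 B"
    unfolding fls_no_pole_sum_diff_iff holo_component_def a_def b_def by blast
  finally show ?thesis .
qed

lemma fls_subdegree_div_pow_mult_pow:
  fixes a b c d :: "complex fls"
  assumes "a \<noteq> 0" "b \<noteq> 0" "c \<noteq> 0" "d \<noteq> 0"
  shows "a / b ^ K * c ^ e * d ^ q \<noteq> 0"
    and "fls_subdegree (a / b ^ K * c ^ e * d ^ q) =
         fls_subdegree a - int K * fls_subdegree b + int e * fls_subdegree c + int q * fls_subdegree d"
  using assms by (simp_all add: fls_divide_subdegree fls_subdegree_pow)

lemma fls_deriv_branch_point: "fls_deriv (fls_const a + fls_X\<^sup>2 :: complex fls) = 2 * fls_X"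
  by (simp add: fls_deriv_power)

lemma fls_subdegree_two_X:
  "(2 * fls_X :: complex fls) \<noteq> 0 \<and> fls_subdegree (2 * fls_X :: complex fls) = 1"
proof -
  have "(2 :: complex fls) = fls_const 2"
    by simp
  then show ?thesis
    by (simp add: fls_subdegree_mult)
qed

lemma holo_component_Fract:
  assumes deg: "degree f = 2 * h" and sf: "rsquarefree f" and K: "2 * K \<le> q + e"
    and bound: "P \<noteq> 0 \<Longrightarrow> degree P + h * e + 2 * q \<le> 2 * h * K"
  shows "holo_component f q e (Fract P (f ^ K))"
  unfolding holo_component_def
proof clarify
  fix X Y assume pl: "(X, Y) \<in> curve_places f"
  have f: "f \<noteq> 0" using sf by (simp add: rsquarefree_def)
  have eval: "eval_ratfun (Fract P (f ^ K)) X = fls_poly P X / fls_poly f X ^ K"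
    using eval_ratfun_Fract[OF curve_places_transcendental[OF pl]] f by (simp add: fls_poly_power)
  show "fls_no_pole (eval_ratfun (Fract P (f ^ K)) X * Y ^ e * fls_deriv X ^ q)"
  proof (cases "P = 0")
    case False
    have "fls_poly P X \<noteq> 0"
      using curve_places_transcendental[OF pl] False unfolding fls_transcendental_def by blast
    note val = fls_subdegree_div_pow_mult_pow[OF this curve_places_square(1,2)[OF pl f]]
    note Y = curve_places_square(3)[OF pl f]
    from pl show ?thesis
    proof (cases rule: curve_placesE)
      case (point a)
      then have "fls_subdegree (fls_poly f X) = 0" "fls_subdegree (fls_poly P X) \<ge> 0" "fls_deriv X = 1"
        using fls_poly_at_point[OF f, of a] fls_poly_at_point[OF False, of a] order_0I[of f a] by auto
      then show ?thesis
        using val[of 1 K e q] Y unfolding eval fls_no_pole_def by simp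
    next
      case (branch_point a)
      then have "fls_subdegree (fls_poly f X) = 2" "fls_subdegree (fls_poly P X) \<ge> 0"
        "fls_deriv X = 2 * fls_X"
        using fls_poly_at_branch_point[OF f, of a] fls_poly_at_branch_point[OF False, of a]
          rsquarefree_root_order[OF sf _ f, of a] fls_deriv_branch_point by auto
      then show ?thesis
        using val[of "2 * fls_X" K e q] Y fls_subdegree_two_X K
        unfolding eval fls_no_pole_def by simp
    next
      case infinity
      then have "fls_subdegree (fls_poly f X) = - 2 * int h" "fls_subdegree (fls_poly P X) = - int (degree P)"
        "fls_deriv X = - (fls_X_inv\<^sup>2)"
        using fls_poly_at_infinity[OF f] fls_poly_at_infinity[OF False] deg by auto
      moreover have "int (degree P + h * e + 2 * q) \<le> int (2 * h * K)"
        using bound[OF False] by (simp only: of_nat_le_iff)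
      moreover have "- (fls_X_inv\<^sup>2) \<noteq> (0 :: complex fls)"
        "fls_subdegree (- (fls_X_inv\<^sup>2) :: complex fls) = -2"
        by auto
      ultimately show ?thesis
        using val[of "- (fls_X_inv\<^sup>2)" K e q] Y
        unfolding eval fls_no_pole_def by (simp add: algebra_simps)
    qed
  qed (use eval in \<open>simp add: fls_no_pole_def\<close>)
qed

lemma order_power: "p \<noteq> 0 \<Longrightarrow> order a (p ^ n) = n * order a p"
  by (induct n) (auto simp: order_mult)

lemma complex_poly_dvd_if_order_le:
  fixes d g :: "complex poly"
  assumes "d \<noteq> 0" "g \<noteq> 0" "\<And>z. order z d \<le> order z g"
  shows "d dvd g"
proof -
  have "proots d \<subseteq># proots g"
    using assms by (simp add: subseteq_mset_def)
  then obtain M where M: "proots g = proots d + M"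
    by (auto simp: subset_mset.le_iff_add)
  have "(\<Prod>x\<in>#proots d. [:-x, 1:]) dvd smult (lead_coeff g) (\<Prod>x\<in>#proots g. [:-x, 1:])"
    by (simp add: M dvd_smult)
  then have "smult (lead_coeff d) (\<Prod>x\<in>#proots d. [:-x, 1:]) dvd g"
    using assms(1) by (intro smult_dvd) (simp_all only: complex_poly_decompose_multiset, simp)
  then show ?thesis
    by (simp only: complex_poly_decompose_multiset)
qed

lemma holo_component_Fract_valuation:
  assumes pl: "(X, Y) \<in> curve_places f" and f: "f \<noteq> 0"
    and holo: "holo_component f q e (Fract n d)" and "n \<noteq> 0" "d \<noteq> 0" "fls_deriv X \<noteq> 0"
  shows "fls_subdegree (fls_poly n X) - fls_subdegree (fls_poly d X) + int e * fls_subdegree Y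
          + int q * fls_subdegree (fls_deriv X) \<ge> 0"
proof -
  have nz: "fls_poly n X \<noteq> 0" "fls_poly d X \<noteq> 0"
    using curve_places_transcendental[OF pl] assms unfolding fls_transcendental_def by auto
  have "fls_no_pole (fls_poly n X / fls_poly d X ^ 1 * Y ^ e * fls_deriv X ^ q)"
    using holo pl eval_ratfun_Fract[OF curve_places_transcendental[OF pl] \<open>d \<noteq> 0\<close>]
    unfolding holo_component_def by auto
  then show ?thesis
    using fls_subdegree_div_pow_mult_pow[OF nz curve_places_square(2)[OF pl f] \<open>fls_deriv X \<noteq> 0\<close>,
        of 1 e q]
      curve_places_square(2)[OF pl f] \<open>fls_deriv X \<noteq> 0\<close>
    unfolding fls_no_pole_def by simp
qed

lemma holo_component_denominator_dvd:
  assumes sf: "rsquarefree f" and cop: "coprime n d" and n: "n \<noteq> 0" and d: "d \<noteq> 0"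
    and holo: "holo_component f q e (Fract n d)"
  shows "d dvd f ^ ((q + e) div 2)"
proof (rule complex_poly_dvd_if_order_le[OF d])
  have f: "f \<noteq> 0" using sf by (simp add: rsquarefree_def)
  then show "f ^ ((q + e) div 2) \<noteq> 0" by simp
  fix z
  show "order z d \<le> order z (f ^ ((q + e) div 2))"
  proof (cases "poly d z = 0")
    case True
    then have "order z n = 0" "order z d > 0"
      using coprime_poly_0[OF cop, of z] d by (auto simp: order_0I order_root)
    show ?thesis
    proof (cases "poly f z = 0")
      case False
      then obtain Y where "(fls_const z + fls_X, Y) \<in> curve_places f" "fls_subdegree Y = 0"
        using curve_place_over_point[OF sf] by blast
      from holo_component_Fract_valuation[OF this(1) f holo n d] this(2)
      have "int (order z n) - int (order z d) \<ge> 0"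
        using fls_poly_at_point[OF n, of z] fls_poly_at_point[OF d, of z] by simp
      with \<open>order z n = 0\<close> \<open>order z d > 0\<close> show ?thesis
        by simp
    next
      case True
      then obtain Y where "(fls_const z + fls_X\<^sup>2, Y) \<in> curve_places f" "fls_subdegree Y = 1"
        using curve_place_over_root[OF sf] by blast
      from holo_component_Fract_valuation[OF this(1) f holo n d] this(2)
      have "2 * int (order z n) - 2 * int (order z d) + int e + int q \<ge> 0"
        using fls_poly_at_branch_point[OF n, of z] fls_poly_at_branch_point[OF d, of z]
          fls_deriv_branch_point fls_subdegree_two_X by simp
      with \<open>order z n = 0\<close> have "2 * order z d \<le> q + e"
        by simp
      moreover have "order z f = 1"
        using rsquarefree_root_order[OF sf True f] .
      ultimately show ?thesis
        by (simp add: order_power f)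
    qed
  qed (simp add: order_0I)
qed

lemma holo_component_necessary:
  assumes deg: "degree f = 2 * h" and sf: "rsquarefree f" and holo: "holo_component f q e A"
  shows "\<exists>P. A = Fract P (f ^ ((q + e) div 2)) \<and>
           (P \<noteq> 0 \<longrightarrow> degree P + h * e + 2 * q \<le> 2 * h * ((q + e) div 2))"
proof (cases "A = 0")
  case True
  then show ?thesis
    by (intro exI[of _ 0]) (simp add: fract_collapse)
next
  case False
  define K where "K = (q + e) div 2"
  define n where "n = fst (quot_of_fract A)"
  define d where "d = snd (quot_of_fract A)"
  have A: "A = Fract n d" and d: "d \<noteq> 0" and n: "n \<noteq> 0" and "coprime n d"
    using False coprime_quot_of_fract[of A] by (simp_all add: n_def d_def)
  have f: "f \<noteq> 0"
    using sf by (simp add: rsquarefree_def)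
  have "d dvd f ^ K"
    unfolding K_def using holo_component_denominator_dvd[OF sf \<open>coprime n d\<close> n d] holo A by simp
  then obtain w where w: "f ^ K = d * w" ..
  with f have "w \<noteq> 0" by auto
  have "degree d + degree w = 2 * h * K"
    using w degree_mult_eq[OF d \<open>w \<noteq> 0\<close>] degree_power_eq[OF f, of K] deg by (simp add: mult.commute)
  moreover obtain Y where Y: "(fls_X_inv, Y) \<in> curve_places f" "fls_subdegree Y = - int h"
    using curve_place_at_infinity[OF f deg] .
  have "fls_subdegree (fls_poly n fls_X_inv) - fls_subdegree (fls_poly d fls_X_inv)
      + int e * fls_subdegree Y + int q * fls_subdegree (fls_deriv (fls_X_inv :: complex fls)) \<ge> 0"
    using holo_component_Fract_valuation[OF Y(1) f holo[unfolded A] n d] by simp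
  then have "- int (degree n) + int (degree d) - int e * int h - 2 * int q \<ge> 0"
    using fls_poly_at_infinity[OF n] fls_poly_at_infinity[OF d] Y(2) by simp
  then have "int (degree n + h * e + 2 * q) \<le> int (degree d)"
    by (simp add: algebra_simps)
  then have "degree n + h * e + 2 * q \<le> degree d"
    by (simp only: of_nat_le_iff)
  moreover have "A = Fract (n * w) (f ^ K)"
    unfolding A w using mult_fract_cancel[OF \<open>w \<noteq> 0\<close>, of n d] by (simp add: mult.commute)
  ultimately show ?thesis
    unfolding K_def[symmetric] using degree_mult_eq[OF n \<open>w \<noteq> 0\<close>]
    by (intro exI[of _ "n * w"]) (simp add: algebra_simps)
qed

lemma holo_component_iff:
  assumes "degree f = 2 * h" "rsquarefree f"
  shows "holo_component f q e A \<longleftrightarrow>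
    (\<exists>P. A = Fract P (f ^ ((q + e) div 2)) \<and>
         (P \<noteq> 0 \<longrightarrow> degree P + h * e + 2 * q \<le> 2 * h * ((q + e) div 2)))"
proof
  assume "\<exists>P. A = Fract P (f ^ ((q + e) div 2)) \<and>
      (P \<noteq> 0 \<longrightarrow> degree P + h * e + 2 * q \<le> 2 * h * ((q + e) div 2))"
  then obtain P where "A = Fract P (f ^ ((q + e) div 2))"
    "P \<noteq> 0 \<longrightarrow> degree P + h * e + 2 * q \<le> 2 * h * ((q + e) div 2)"
    by blast
  then show "holo_component f q e A"
    using holo_component_Fract[OF assms, of "(q + e) div 2" q e P] by auto
qed (rule holo_component_necessary[OF assms])

definition degree_below :: "nat \<Rightarrow> 'a::zero poly \<Rightarrow> bool" where
  "degree_below N p \<longleftrightarrow> (p \<noteq> 0 \<longrightarrow> degree p < N)"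

lemma degree_below_0 [simp]: "degree_below N 0"
  by (simp add: degree_below_def)

lemma degree_below_add: "degree_below N p \<Longrightarrow> degree_below N q \<Longrightarrow> degree_below N (p + q)"
  unfolding degree_below_def using degree_add_le_max[of p q] by (cases "p = 0 \<or> q = 0") auto

lemma degree_below_smult: "degree_below N p \<Longrightarrow> degree_below N (smult c p)"
  unfolding degree_below_def using degree_smult_le[of c p] by fastforce

lemma degree_below_sum: "(\<And>j. j \<in> S \<Longrightarrow> degree_below N (g j)) \<Longrightarrow> degree_below N (sum g S)"
  by (induct S rule: infinite_finite_induct) (simp_all add: degree_below_add)

lemma degree_below_diff:
  fixes p q :: "'a::ab_group_add poly"
  shows "degree_below N p \<Longrightarrow> degree_below N q \<Longrightarrow> degree_below N (p - q)"
  using degree_below_add[of N p "- q"] by (simp add: degree_below_def)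

lemma degree_below_shifted_power: "j < N \<Longrightarrow> degree_below N ([:-\<beta>, 1:] ^ j)"
  by (simp add: degree_below_def degree_linear_power)

text \<open>The bounds use truncated subtraction: a bound 0 forces the numerator to vanish, as happens for
  A when q = 1.\<close>

lemma holo_qdiff_iff:
  assumes "degree f = 2 * h" "rsquarefree f"
  shows "holo_qdiff f q (A, B) \<longleftrightarrow>
    (\<exists>P. A = Fract P (f ^ (q div 2)) \<and> degree_below (2 * h * (q div 2) + 1 - 2 * q) P) \<and>
    (\<exists>Q. B = Fract Q (f ^ ((q + 1) div 2)) \<and> degree_below (2 * h * ((q + 1) div 2) + 1 - (h + 2 * q)) Q)"
proof -
  have "(P \<noteq> 0 \<longrightarrow> degree P + 2 * q \<le> 2 * h * K) \<longleftrightarrow> degree_below (2 * h * K + 1 - 2 * q) P"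
    "(P \<noteq> 0 \<longrightarrow> degree P + h + 2 * q \<le> 2 * h * K) \<longleftrightarrow> degree_below (2 * h * K + 1 - (h + 2 * q)) P"
    for P :: "complex poly" and K
    by (auto simp: degree_below_def)
  then show ?thesis
    unfolding holo_qdiff_iff_components holo_component_iff[OF assms]
    by (simp only: mult_0_right add_0_right mult_1_right)
qed

lemma pcompose_power_left: "pcompose (p ^ n) q = pcompose p q ^ n"
  by (induct n) (simp_all add: pcompose_mult pcompose_1)

lemma pcompose_shifted_powers_sum:
  fixes a :: "nat \<Rightarrow> 'a::comm_ring_1"
  shows "pcompose (\<Sum>j<N. smult (a j) ([:-\<beta>, 1:] ^ j)) [:\<beta>, 1:] = (\<Sum>j<N. monom (a j) j)"
  by (simp add: pcompose_sum pcompose_smult pcompose_power_left pcompose_pCons monom_altdef)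

lemma shifted_powers_independent:
  fixes a :: "nat \<Rightarrow> 'a::comm_ring_1"
  assumes "(\<Sum>j<N. smult (a j) ([:-\<beta>, 1:] ^ j)) = 0" "i < N"
  shows "a i = 0"
proof -
  have "coeff (\<Sum>j<N. monom (a j) j) i = 0"
    using pcompose_shifted_powers_sum[where a = a and N = N and \<beta> = \<beta>] assms(1) by simp
  with assms(2) show ?thesis
    by (simp add: coeff_sum coeff_monom)
qed

lemma shifted_powers_span:
  fixes P :: "'a::idom poly"
  assumes "degree_below N P"
  obtains a where "P = (\<Sum>j<N. smult (a j) ([:-\<beta>, 1:] ^ j))"
proof (cases "P = 0")
  case True
  then show ?thesis by (intro that[of "\<lambda>_. 0"]) simp
next
  case False
  define Q where "Q = pcompose P [:\<beta>, 1:]"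
  have "degree Q < N"
    using assms False by (simp add: Q_def degree_below_def degree_pcompose)
  then have Q: "Q = (\<Sum>j<N. monom (coeff Q j) j)"
    by (intro poly_eqI) (auto simp: coeff_sum coeff_monom coeff_eq_0)
  have "pcompose Q [:-\<beta>, 1:] = (\<Sum>j<N. smult (coeff Q j) ([:-\<beta>, 1:] ^ j))"
    using arg_cong[OF Q, of "\<lambda>p. pcompose p [:-\<beta>, 1:]"]
    by (simp add: pcompose_sum monom_altdef pcompose_smult pcompose_power_left pcompose_pCons)
  moreover have "pcompose Q [:-\<beta>, 1:] = P"
    by (simp add: Q_def pcompose_pCons flip: pcompose_assoc)
  ultimately show ?thesis
    by (intro that) simp
qed

lemma shifted_blocks_independent:
  fixes cA cB :: "nat \<Rightarrow> 'a::comm_ring_1"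
  assumes "(\<Sum>j<NA. smult (cA j) ([:-\<beta>, 1:] ^ j)) + (\<Sum>j<NB. smult (cB j) (T j)) = 0"
    and "(\<Sum>j<NB. smult (cB j) ([:-\<beta>, 1:] ^ j)) = 0"
  shows "\<forall>j<NA. cA j = 0" "\<forall>j<NB. cB j = 0"
proof -
  show "\<forall>j<NB. cB j = 0"
    using assms(2) shifted_powers_independent by blast
  then show "\<forall>j<NA. cA j = 0"
    using assms(1) shifted_powers_independent[where a = cA] by simp
qed

lemma shifted_blocks_span:
  fixes P Q :: "'a::idom poly"
  assumes "degree_below NA P" "degree_below NB Q" "\<And>j. j < NB \<Longrightarrow> degree_below NA (T j)"
  obtains cA cB where "P = (\<Sum>j<NA. smult (cA j) ([:-\<beta>, 1:] ^ j)) + (\<Sum>j<NB. smult (cB j) (T j))"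
    "Q = (\<Sum>j<NB. smult (cB j) ([:-\<beta>, 1:] ^ j))"
proof -
  obtain cB where cB: "Q = (\<Sum>j<NB. smult (cB j) ([:-\<beta>, 1:] ^ j))"
    using shifted_powers_span[OF assms(2)] .
  have "degree_below NA (P - (\<Sum>j<NB. smult (cB j) (T j)))"
    using assms(1,3) by (intro degree_below_diff degree_below_sum degree_below_smult) auto
  then obtain cA where "P - (\<Sum>j<NB. smult (cB j) (T j)) = (\<Sum>j<NA. smult (cA j) ([:-\<beta>, 1:] ^ j))"
    using shifted_powers_span by blast
  with cB show ?thesis
    by (intro that[of cA cB]) (simp_all add: algebra_simps)
qed

lemma sum_bij_betw_Plus:
  fixes NA NB n :: nat
  assumes "bij_betw idx ({..<NA} <+> {..<NB}) {..<n}"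
  shows "(\<Sum>i<n. g i) = (\<Sum>j<NA. g (idx (Inl j))) + (\<Sum>j<NB. g (idx (Inr j)))"
  unfolding sum.reindex_bij_betw[OF assms, symmetric]
  by (subst sum.Plus) (simp_all add: comp_def)

lemma bij_betw_Plus_lessThanE:
  fixes NA NB n :: nat
  assumes "bij_betw idx ({..<NA} <+> {..<NB}) {..<n}" "i < n"
  obtains (Inl) j where "j < NA" "i = idx (Inl j)" | (Inr) j where "j < NB" "i = idx (Inr j)"
proof -
  have "i \<in> idx ` ({..<NA} <+> {..<NB})"
    using assms bij_betw_imp_surj_on by blast
  then obtain s where "s \<in> {..<NA} <+> {..<NB}" "i = idx s"
    by blast
  then show ?thesis
    using that by (cases s) auto
qed

lemma bij_betw_Plus_extend:
  fixes NA NB n :: nat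
  assumes "bij_betw idx ({..<NA} <+> {..<NB}) {..<n}"
  obtains c where "\<And>j. j < NA \<Longrightarrow> c (idx (Inl j)) = cA j" "\<And>j. j < NB \<Longrightarrow> c (idx (Inr j)) = cB j"
proof
  define c where "c i = (case inv_into ({..<NA} <+> {..<NB}) idx i of Inl j \<Rightarrow> cA j | Inr j \<Rightarrow> cB j)" for i
  show "c (idx (Inl j)) = cA j" if "j < NA" for j
    using that bij_betw_inv_into_left[OF assms, of "Inl j"] by (simp add: c_def Plus_def)
  show "c (idx (Inr j)) = cB j" if "j < NB" for j
    using that bij_betw_inv_into_left[OF assms, of "Inr j"] by (simp add: c_def Plus_def)
qed

lemma Fract_add_same_denom: "d \<noteq> 0 \<Longrightarrow> Fract a d + Fract b d = Fract (a + b) (d :: 'a::idom)"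
  using mult_fract_cancel[of d "a + b" d] by (simp add: algebra_simps)

lemma sum_Fract:
  fixes p :: "'b \<Rightarrow> 'a::idom poly"
  assumes "d \<noteq> 0"
  shows "(\<Sum>i\<in>S. Fract (p i) d) = Fract (\<Sum>i\<in>S. p i) d"
proof (induct S rule: infinite_finite_induct)
  case (insert x F)
  with assms show ?case by (simp add: Fract_add_same_denom del: add_fract)
qed (simp_all add: fract_collapse)

lemma ff_lincomb_blocks:
  fixes NA NB :: nat
  assumes idx: "bij_betw idx ({..<NA} <+> {..<NB}) {..<n}" and "DA \<noteq> 0" "DB \<noteq> 0"
    and first: "\<And>j. j < NA \<Longrightarrow> b (idx (Inl j)) = (Fract (U j) DA, 0)"
    and second: "\<And>j. j < NB \<Longrightarrow> b (idx (Inr j)) = (Fract (T j) DA, Fract (V j) DB)"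
  shows "ff_lincomb c b n =
    (Fract ((\<Sum>j<NA. smult (c (idx (Inl j))) (U j)) + (\<Sum>j<NB. smult (c (idx (Inr j))) (T j))) DA,
     Fract (\<Sum>j<NB. smult (c (idx (Inr j))) (V j)) DB)"
proof -
  have scale: "ff_scale a (Fract u D, Fract v D') = (Fract (smult a u) D, Fract (smult a v) D')"
    "ff_scale a (Fract u D, 0) = (Fract (smult a u) D, 0)"
    for a u v D D'
    by (simp_all add: ff_scale_def ratfun_of_poly_def)
  show ?thesis
    unfolding ff_lincomb_def sum_bij_betw_Plus[OF idx]
    using first second \<open>DA \<noteq> 0\<close> \<open>DB \<noteq> 0\<close>
    by (simp add: scale fract_collapse sum_Fract Fract_add_same_denom del: add_fract)
qed

lemma Fract_eq_0_iff: "d \<noteq> 0 \<Longrightarrow> Fract a d = 0 \<longleftrightarrow> a = (0 :: 'a::idom)"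
  by (simp add: Zero_fract_def eq_fract)

lemma is_basis_H0_blocks:
  fixes NA NB :: nat and idx :: "nat + nat \<Rightarrow> nat"
  assumes holo: "\<And>A B. holo_qdiff f q (A, B) \<longleftrightarrow>
      (\<exists>P. A = Fract P DA \<and> degree_below NA P) \<and> (\<exists>Q. B = Fract Q DB \<and> degree_below NB Q)"
    and DA: "DA \<noteq> 0" and DB: "DB \<noteq> 0"
    and idx: "bij_betw idx ({..<NA} <+> {..<NB}) {..<n}"
    and first: "\<And>j. j < NA \<Longrightarrow> b (idx (Inl j)) = (Fract ([:-\<beta>, 1:] ^ j) DA, 0)"
    and second: "\<And>j. j < NB \<Longrightarrow> b (idx (Inr j)) = (Fract (T j) DA, Fract ([:-\<beta>, 1:] ^ j) DB)"
    and T: "\<And>j. j < NB \<Longrightarrow> degree_below NA (T j)"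
  shows "is_basis_H0 f q n b"
  unfolding is_basis_H0_def
proof (intro conjI allI impI)
  note lincomb = ff_lincomb_blocks[OF idx DA DB first second]
  have idx_cases: "(\<exists>j<NA. i = idx (Inl j)) \<or> (\<exists>j<NB. i = idx (Inr j))" if "i < n" for i
    using bij_betw_Plus_lessThanE[OF idx that] by metis
  show "holo_qdiff f q (b i)" if "i < n" for i
    using idx_cases[OF that]
  proof (elim disjE exE conjE)
    fix j assume "j < NA" "i = idx (Inl j)"
    moreover have "(0 :: ratfun) = Fract 0 DB"
      by (simp add: fract_collapse)
    ultimately show ?thesis
      using holo first degree_below_shifted_power degree_below_0 by metis
  next
    fix j assume "j < NB" "i = idx (Inr j)"
    then show ?thesis
      using holo second T degree_below_shifted_power by metis
  qed
  show "c i = 0" if "ff_lincomb c b n = (0, 0)" "i < n" for c i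
  proof -
    have "(\<Sum>j<NA. smult (c (idx (Inl j))) ([:-\<beta>, 1:] ^ j))
        + (\<Sum>j<NB. smult (c (idx (Inr j))) (T j)) = 0"
      "(\<Sum>j<NB. smult (c (idx (Inr j))) ([:-\<beta>, 1:] ^ j)) = 0"
      using that(1) by (simp_all add: lincomb Fract_eq_0_iff DA DB)
    from shifted_blocks_independent[OF this] show ?thesis
      using idx_cases[OF \<open>i < n\<close>] by blast
  qed
  show "\<exists>c. g = ff_lincomb c b n" if "holo_qdiff f q g" for g
  proof -
    obtain P Q where g: "g = (Fract P DA, Fract Q DB)" "degree_below NA P" "degree_below NB Q"
      using \<open>holo_qdiff f q g\<close> holo by (metis prod.collapse)
    obtain cA cB where
      "P = (\<Sum>j<NA. smult (cA j) ([:-\<beta>, 1:] ^ j)) + (\<Sum>j<NB. smult (cB j) (T j))"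
      "Q = (\<Sum>j<NB. smult (cB j) ([:-\<beta>, 1:] ^ j))"
      using shifted_blocks_span[OF g(2,3) T] .
    moreover obtain c where "\<And>j. j < NA \<Longrightarrow> c (idx (Inl j)) = cA j" "\<And>j. j < NB \<Longrightarrow> c (idx (Inr j)) = cB j"
      using bij_betw_Plus_extend[OF idx, of cA cB] by blast
    ultimately have "ff_lincomb c b n = g"
      unfolding g by (simp add: lincomb)
    then show ?thesis by blast
  qed
qed

lemma Fract_power: "Fract a b ^ n = Fract (a ^ n) (b ^ n :: 'a::idom)"
  by (induct n) (simp_all add: fract_collapse)

lemma xb_power: "xb \<beta> ^ j = Fract ([:-\<beta>, 1:] ^ j) 1"
  by (simp add: xb_def ratfun_of_poly_def Fract_power)

lemma ff_mult_y_inv_pow: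
  assumes "f \<noteq> 0"
  shows "ff_mult f (Fract a 1, Fract b 1) (y_inv_pow f q) =
    (if even q then (Fract a (f ^ (q div 2)), Fract b (f ^ ((q + 1) div 2)))
     else (Fract b (f ^ (q div 2)), Fract a (f ^ ((q + 1) div 2))))"
proof (cases "even q")
  case True
  then show ?thesis
    by (simp add: ff_mult_def y_inv_pow_def ratfun_of_poly_def Fract_power fract_collapse)
next
  case False
  then have "(q + 1) div 2 = Suc (q div 2)"
    by presburger
  with False assms show ?thesis
    by (simp add: ff_mult_def y_inv_pow_def ratfun_of_poly_def Fract_power fract_collapse
        mult_fract_cancel)
qed

lemma bij_betw_blocks_Inl_first:
  "bij_betw (case_sum id (\<lambda>j. a + j)) ({..<a} <+> {..<b}) {..<a + (b :: nat)}"
  by (rule bij_betwI[where g = "\<lambda>i. if i < a then Inl i else Inr (i - a)"]) auto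

lemma bij_betw_blocks_Inr_first:
  "bij_betw (case_sum (\<lambda>j. b + j) id) ({..<a} <+> {..<b}) {..<b + (a :: nat)}"
  by (rule bij_betwI[where g = "\<lambda>i. if i < b then Inr i else Inl (i - b)"]) auto

lemma H0_basis_one_forms:
  assumes deg: "degree f = 8" and sf: "rsquarefree f"
  shows "is_basis_H0 f 1 3 (\<lambda>j. ff_mult f (xb \<beta> ^ j, 0) (y_inv_pow f 1))"
    (is "is_basis_H0 _ _ _ ?b")
proof -
  have f: "f \<noteq> 0" using sf by (simp add: rsquarefree_def)
  have holo: "holo_qdiff f 1 (A, B) \<longleftrightarrow> (\<exists>P. A = Fract P 1 \<and> degree_below 0 P) \<and>
      (\<exists>Q. B = Fract Q f \<and> degree_below 3 Q)" for A B
    using holo_qdiff_iff[of f 4 1 A B] deg sf by simp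
  have idx: "bij_betw (case_sum id (\<lambda>j. j)) ({..<0} <+> {..<3}) {..<3::nat}"
    using bij_betw_blocks_Inl_first[of 0 3] by simp
  show ?thesis
  proof (rule is_basis_H0_blocks[OF holo _ f idx, where T = "\<lambda>_. 0"])
    show "?b (case_sum id (\<lambda>j. j) (Inr j)) = (Fract 0 1, Fract ([:-\<beta>, 1:] ^ j) f)" for j
      using ff_mult_y_inv_pow[OF f, of "[:-\<beta>, 1:] ^ j" 0 1] by (simp add: xb_power fract_collapse)
  qed simp_all
qed

lemma degree_below_taylor4: "degree_below 5 (taylor4 w Y)"
  unfolding taylor4_def
  by (intro degree_below_sum degree_below_smult degree_below_shifted_power) simp

lemma H0_basis_quadratic_differentials:
  assumes deg: "degree f = 8" and sf: "rsquarefree f" and T: "degree_below 5 T"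
  shows "is_basis_H0 f 2 6 (\<lambda>j. if j \<le> 4 then ff_mult f (xb \<beta> ^ j, 0) (y_inv_pow f 2)
                               else ff_mult f (- ratfun_of_poly T, 1) (y_inv_pow f 2))"
    (is "is_basis_H0 _ _ _ ?b")
proof -
  have f: "f \<noteq> 0" using sf by (simp add: rsquarefree_def)
  have holo: "holo_qdiff f 2 (A, B) \<longleftrightarrow> (\<exists>P. A = Fract P f \<and> degree_below 5 P) \<and>
      (\<exists>Q. B = Fract Q f \<and> degree_below 1 Q)" for A B
    using holo_qdiff_iff[of f 4 2 A B] deg sf by simp
  have idx: "bij_betw (case_sum id (\<lambda>j. 5 + j)) ({..<5} <+> {..<1}) {..<6::nat}"
    using bij_betw_blocks_Inl_first[of 5 1] by simp
  have mult: "ff_mult f (Fract a 1, Fract b 1) (y_inv_pow f 2) = (Fract a f, Fract b f)" for a b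
    using ff_mult_y_inv_pow[OF f, of a b 2] by simp
  show ?thesis
  proof (rule is_basis_H0_blocks[OF holo f f idx, where T = "\<lambda>_. - T"])
    show "?b (case_sum id (\<lambda>j. 5 + j) (Inl j)) = (Fract ([:-\<beta>, 1:] ^ j) f, 0)"
      if "j < 5" for j
      using that mult[of "[:-\<beta>, 1:] ^ j" 0] by (simp add: xb_power fract_collapse)
    show "?b (case_sum id (\<lambda>j. 5 + j) (Inr j)) = (Fract (- T) f, Fract ([:-\<beta>, 1:] ^ j) f)"
      if "j < 1" for j
      using that mult[of "- T" 1] by (simp add: ratfun_of_poly_def fract_collapse)
    show "degree_below 5 (- T)"
      using T by (simp add: degree_below_def)
  qed
qed

lemma H0_basis_higher_differentials_even:
  assumes deg: "degree f = 8" and sf: "rsquarefree f" and q: "q \<ge> 2" "even q"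
  shows "is_basis_H0 f q (4 * q - 2)
          (\<lambda>j. if j \<le> 2 * q then ff_mult f (xb \<beta> ^ j, 0) (y_inv_pow f q)
               else ff_mult f (0, xb \<beta> ^ (j - (2 * q + 1))) (y_inv_pow f q))"
    (is "is_basis_H0 _ _ _ ?b")
proof -
  have f: "f \<noteq> 0" using sf by (simp add: rsquarefree_def)
  have arith: "(q + 1) div 2 = q div 2" "2 * 4 * (q div 2) + 1 - 2 * q = 2 * q + 1"
    "2 * 4 * (q div 2) + 1 - (4 + 2 * q) = 2 * q - 3" "4 * q - 2 = (2 * q + 1) + (2 * q - 3)"
    using q by auto
  have "degree f = 2 * 4"
    using deg by simp
  note holo = holo_qdiff_iff[OF this sf, of q, unfolded arith]
  have mult: "ff_mult f (Fract a 1, Fract b 1) (y_inv_pow f q) =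
      (Fract a (f ^ (q div 2)), Fract b (f ^ (q div 2)))" for a b
    using ff_mult_y_inv_pow[OF f, of a b q] q arith by simp
  show ?thesis
    unfolding arith
  proof (rule is_basis_H0_blocks[OF holo _ _ bij_betw_blocks_Inl_first, where T = "\<lambda>_. 0"])
    show "?b (case_sum id (\<lambda>j. 2 * q + 1 + j) (Inl j)) = (Fract ([:-\<beta>, 1:] ^ j) (f ^ (q div 2)), 0)"
      if "j < 2 * q + 1" for j
      using that mult[of "[:-\<beta>, 1:] ^ j" 0] by (simp add: xb_power fract_collapse)
    show "?b (case_sum id (\<lambda>j. 2 * q + 1 + j) (Inr j)) =
        (Fract 0 (f ^ (q div 2)), Fract ([:-\<beta>, 1:] ^ j) (f ^ (q div 2)))" for j
      using mult[of 0 "[:-\<beta>, 1:] ^ j"] by (simp add: xb_power fract_collapse)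
  qed (simp_all add: f)
qed

lemma H0_basis_higher_differentials_odd:
  assumes deg: "degree f = 8" and sf: "rsquarefree f" and q: "q \<ge> 2" "odd q"
  shows "is_basis_H0 f q (4 * q - 2)
          (\<lambda>j. if j \<le> 2 * q then ff_mult f (xb \<beta> ^ j, 0) (y_inv_pow f q)
               else ff_mult f (0, xb \<beta> ^ (j - (2 * q + 1))) (y_inv_pow f q))"
    (is "is_basis_H0 _ _ _ ?b")
proof -
  have f: "f \<noteq> 0" using sf by (simp add: rsquarefree_def)
  have arith: "2 * 4 * (q div 2) + 1 - 2 * q = 2 * q - 3"
    "2 * 4 * ((q + 1) div 2) + 1 - (4 + 2 * q) = 2 * q + 1" "4 * q - 2 = (2 * q + 1) + (2 * q - 3)"
    using q by (auto elim!: oddE)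
  have "degree f = 2 * 4"
    using deg by simp
  note holo = holo_qdiff_iff[OF this sf, of q, unfolded arith]
  have mult: "ff_mult f (Fract a 1, Fract b 1) (y_inv_pow f q) =
      (Fract b (f ^ (q div 2)), Fract a (f ^ ((q + 1) div 2)))" for a b
    using ff_mult_y_inv_pow[OF f, of a b q] q by simp
  show ?thesis
    unfolding arith
  proof (rule is_basis_H0_blocks[OF holo _ _ bij_betw_blocks_Inr_first, where T = "\<lambda>_. 0"])
    show "?b (case_sum (\<lambda>j. 2 * q + 1 + j) id (Inl j)) = (Fract ([:-\<beta>, 1:] ^ j) (f ^ (q div 2)), 0)"
      for j
      using mult[of 0 "[:-\<beta>, 1:] ^ j"] by (simp add: xb_power fract_collapse)
    show "?b (case_sum (\<lambda>j. 2 * q + 1 + j) id (Inr j)) =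
        (Fract 0 (f ^ (q div 2)), Fract ([:-\<beta>, 1:] ^ j) (f ^ ((q + 1) div 2)))"
      if "j < 2 * q + 1" for j
      using that mult[of "[:-\<beta>, 1:] ^ j" 0] by (simp add: xb_power fract_collapse)
  qed (simp_all add: f)
qed

theorem mainTheorem1:
  fixes f :: "complex poly"
  assumes "degree f = 8" and "rsquarefree f"
  shows
    "(\<forall>\<beta>. is_basis_H0 f 1 3 (\<lambda>j. ff_mult f (xb \<beta> ^ j, 0) (y_inv_pow f 1)))
   \<and> (\<forall>\<beta> T. (if poly f \<beta> = 0 then T = 0
             else (\<exists>Y. Y\<^sup>2 = poly (map_poly fls_const f) (fls_const \<beta> + fls_X)
                      \<and> T = taylor4 \<beta> Y)) \<longrightarrow>
        is_basis_H0 f 2 6 (\<lambda>j. if j \<le> 4 then ff_mult f (xb \<beta> ^ j, 0) (y_inv_pow f 2)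
                               else ff_mult f (- ratfun_of_poly T, 1) (y_inv_pow f 2)))
   \<and> (\<forall>q \<beta>. q \<ge> 2 \<and> poly f \<beta> = 0 \<longrightarrow>
        is_basis_H0 f q (4 * q - 2)
          (\<lambda>j. if j \<le> 2 * q then ff_mult f (xb \<beta> ^ j, 0) (y_inv_pow f q)
               else ff_mult f (0, xb \<beta> ^ (j - (2 * q + 1))) (y_inv_pow f q)))"
proof (intro conjI allI impI)
  show "is_basis_H0 f 1 3 (\<lambda>j. ff_mult f (xb \<beta> ^ j, 0) (y_inv_pow f 1))" for \<beta>
    using H0_basis_one_forms[OF assms] .
next
  fix \<beta> T
  assume "if poly f \<beta> = 0 then T = 0
    else (\<exists>Y. Y\<^sup>2 = poly (map_poly fls_const f) (fls_const \<beta> + fls_X) \<and> T = taylor4 \<beta> Y)"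
  then have "degree_below 5 T"
    using degree_below_taylor4 by (auto split: if_splits)
  then show "is_basis_H0 f 2 6 (\<lambda>j. if j \<le> 4 then ff_mult f (xb \<beta> ^ j, 0) (y_inv_pow f 2)
      else ff_mult f (- ratfun_of_poly T, 1) (y_inv_pow f 2))"
    by (rule H0_basis_quadratic_differentials[OF assms])
next
  fix q :: nat and \<beta> :: complex
  assume "2 \<le> q \<and> poly f \<beta> = 0"
  then show "is_basis_H0 f q (4 * q - 2) (\<lambda>j. if j \<le> 2 * q then ff_mult f (xb \<beta> ^ j, 0) (y_inv_pow f q)
      else ff_mult f (0, xb \<beta> ^ (j - (2 * q + 1))) (y_inv_pow f q))"
    using H0_basis_higher_differentials_even[OF assms] H0_basis_higher_differentials_odd[OF assms]
    by blast
qed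

end
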